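(* Let $(a_n)_{n\ge0}$ be nonzero complex numbers with $|a_0|\ge|a_1|\ge\cdots$ and $\sum_n|a_n|^2<\infty$, and let $T$ be the weighted shift $Te_n=a_ne_{n+1}$. Then for every $S\in\mathcal A_T$, the partial sums $\sum_{k=1}^n\hat S(k)T^k$ converge to $S$ in operator norm as $n\to\infty$.
   Context: $H$ is a complex Hilbert space with orthonormal basis $\{e_n\}_{n\ge0}$, $Te_n=a_ne_{n+1}$, and $\mathcal A_T$ is the operator-norm closure of the polynomials $p(T)$ with $p(0)=0$. For $\lambda$ in the unit circle $\mathbb T$ let $W_\lambda e_n=\lambda^ne_n$; $\gamma_\lambda(S)=W_\lambda SW_\lambda^*$ defines a norm-continuous action of $\mathbb T$ on $\mathcal A_T$ by isometric automorphisms with $\gamma_\lambda(T)=\lambda T$. For $S\in\mathcal A_T$ and $k\ge1$, $\hat S(k)\in\mathbb C$ is defined by $\int_{\mathbb T}\gamma_\lambda(S)\lambda^{-k}\,dm(\lambda)=\hat S(k)T^k$, where $dm$ is normalized Haar measure on $\mathbb T$. *)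

theory Defs
  imports "HOL-Analysis.Analysis"
begin

text \<open>Concrete model: H = l2(nat) with e_n the standard unit vectors.
  Vectors are functions nat => complex; operators are maps on such functions,
  only their behaviour on l2 matters.\<close>

definition l2 :: "(nat \<Rightarrow> complex) set" where
  "l2 = {x. summable (\<lambda>n. (cmod (x n))\<^sup>2)}"

definition l2norm :: "(nat \<Rightarrow> complex) \<Rightarrow> real" where
  "l2norm x = sqrt (\<Sum>n. (cmod (x n))\<^sup>2)"

definition unitvec :: "nat \<Rightarrow> nat \<Rightarrow> complex" where
  "unitvec n = (\<lambda>m. if m = n then 1 else 0)"

definition wshift :: "(nat \<Rightarrow> complex) \<Rightarrow> (nat \<Rightarrow> complex) \<Rightarrow> (nat \<Rightarrow> complex)" where
  "wshift a x = (\<lambda>m. if m = 0 then 0 else a (m - 1) * x (m - 1))"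

definition bounded_op :: "((nat \<Rightarrow> complex) \<Rightarrow> (nat \<Rightarrow> complex)) \<Rightarrow> bool" where
  "bounded_op S \<longleftrightarrow>
     (\<forall>x\<in>l2. S x \<in> l2) \<and>
     (\<forall>x\<in>l2. \<forall>y\<in>l2. \<forall>c::complex. S (\<lambda>n. x n + c * y n) = (\<lambda>n. S x n + c * S y n)) \<and>
     (\<exists>C. \<forall>x\<in>l2. l2norm (S x) \<le> C * l2norm x)"

definition opnorm :: "((nat \<Rightarrow> complex) \<Rightarrow> (nat \<Rightarrow> complex)) \<Rightarrow> real" where
  "opnorm S = Sup {l2norm (S x) | x. x \<in> l2 \<and> l2norm x \<le> 1}"

definition polyop :: "(nat \<Rightarrow> complex) \<Rightarrow> (nat \<Rightarrow> complex) \<Rightarrow> nat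
                       \<Rightarrow> (nat \<Rightarrow> complex) \<Rightarrow> (nat \<Rightarrow> complex)" where
  "polyop a c N x = (\<lambda>m. \<Sum>k=1..N. c k * (wshift a ^^ k) x m)"

definition alg_T :: "(nat \<Rightarrow> complex) \<Rightarrow> ((nat \<Rightarrow> complex) \<Rightarrow> (nat \<Rightarrow> complex)) set" where
  "alg_T a = {S. bounded_op S \<and>
     (\<forall>\<epsilon>>0. \<exists>c N. opnorm (\<lambda>x m. S x m - polyop a c N x m) < \<epsilon>)}"

text \<open>W_lambda e_n = lambda^n e_n, and gamma_lambda(S) = W_lambda S W_lambda^*.\<close>
definition Wop :: "complex \<Rightarrow> (nat \<Rightarrow> complex) \<Rightarrow> (nat \<Rightarrow> complex)" where
  "Wop l x = (\<lambda>n. l ^ n * x n)"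

definition gamma_act :: "complex \<Rightarrow> ((nat \<Rightarrow> complex) \<Rightarrow> (nat \<Rightarrow> complex))
                          \<Rightarrow> (nat \<Rightarrow> complex) \<Rightarrow> (nat \<Rightarrow> complex)" where
  "gamma_act l S x = Wop l (S (Wop (cnj l) x))"

text \<open>The operator int_T gamma_lambda(S) lambda^(-k) dm(lambda), with dm normalized Haar
  measure on the circle (lambda = cis t, dm = dt / (2 pi)), applied to x, coordinate m.\<close>
definition fourier_int :: "((nat \<Rightarrow> complex) \<Rightarrow> (nat \<Rightarrow> complex)) \<Rightarrow> nat
                            \<Rightarrow> (nat \<Rightarrow> complex) \<Rightarrow> (nat \<Rightarrow> complex)" where
  "fourier_int S k x = (\<lambda>m. integral {0..2*pi}
       (\<lambda>t. gamma_act (cis t) S x m * inverse (cis t) ^ k) / complex_of_real (2*pi))"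

definition fcoeff :: "(nat \<Rightarrow> complex) \<Rightarrow> ((nat \<Rightarrow> complex) \<Rightarrow> (nat \<Rightarrow> complex)) \<Rightarrow> nat \<Rightarrow> complex" where
  "fcoeff a S k = (THE c. \<forall>x\<in>l2. fourier_int S k x = (\<lambda>m. c * (wshift a ^^ k) x m))"

end

theory Submission
  imports Defs
begin

text \<open>
  Put w_k(j) = a_j a_(j+1) ... a_(j+k-1), so that T^k e_j = w_k(j) e_(j+k); monotonicity of |a_n|
  gives |w_k(j)| |a_0| <= |a_j| |w_k(0)|. By Cauchy-Schwarz this yields, for every polynomial
  p(z) = sum_(k=1..n) d_k z^k, the estimate ||p(T)|| <= (||a||_2 / |a_0|) (sum_k |d_k|^2 |w_k(0)|^2)^(1/2),
  the last factor being ||p(T) e_0||.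
  Integrating gamma_lambda against lambda^(-k) keeps only the k-th monomial of a polynomial, so
  approximating S by polynomials shows that the k-th Fourier coefficient of S is (S e_0)_k / w_k(0).
  Hence if ||S - p(T)|| <= eps with deg p <= n, the coefficients of p(T) - sum_(k<=n) S^(k) T^k
  are read off from (p(T) - S) e_0, so this operator has norm at most (||a||_2 / |a_0|) eps, and
  the n-th partial sum lies within (1 + ||a||_2 / |a_0|) eps of S.
\<close>

section \<open>Square-summable sequences\<close>

lemma
  assumes "\<And>M. (\<Sum>m<M. (cmod (y m))\<^sup>2) \<le> B\<^sup>2" and "0 \<le> B"
  shows l2I_partial_sums: "y \<in> l2"
    and l2norm_le_partial_sums: "l2norm y \<le> B"
proof -
  have summable: "summable (\<lambda>m. (cmod (y m))\<^sup>2)"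
    by (rule summableI_nonneg_bounded[where x="B\<^sup>2"]) (use assms in auto)
  then show "y \<in> l2" by (simp add: l2_def)
  have "(\<Sum>m. (cmod (y m))\<^sup>2) \<le> B\<^sup>2"
    by (rule suminf_le_const[OF summable]) (use assms in auto)
  then have "sqrt (\<Sum>m. (cmod (y m))\<^sup>2) \<le> sqrt (B\<^sup>2)" by (rule real_sqrt_le_mono)
  then show "l2norm y \<le> B" using assms(2) by (simp add: l2norm_def)
qed

lemma l2norm_squared: "y \<in> l2 \<Longrightarrow> (l2norm y)\<^sup>2 = (\<Sum>m. (cmod (y m))\<^sup>2)"
  unfolding l2_def l2norm_def by (simp add: suminf_nonneg)

lemma l2norm_nonneg: "y \<in> l2 \<Longrightarrow> 0 \<le> l2norm y"
  unfolding l2_def l2norm_def by (simp add: suminf_nonneg)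

lemma sum_sq_le_l2norm_sq:
  assumes "y \<in> l2" "finite A"
  shows "(\<Sum>m\<in>A. (cmod (y m))\<^sup>2) \<le> (l2norm y)\<^sup>2"
  using assms by (simp add: l2norm_squared) (rule sum_le_suminf, auto simp: l2_def)

lemma cmod_le_l2norm:
  assumes y: "y \<in> l2"
  shows "cmod (y m) \<le> l2norm y"
proof -
  have "(cmod (y m))\<^sup>2 \<le> (l2norm y)\<^sup>2" using sum_sq_le_l2norm_sq[OF y, of "{m}"] by simp
  then show ?thesis using l2norm_nonneg[OF y] by (rule power2_le_imp_le)
qed

lemma L2_set_le_l2norm: "y \<in> l2 \<Longrightarrow> L2_set (\<lambda>m. cmod (y m)) {..<M} \<le> l2norm y"
  unfolding L2_set_def using sum_sq_le_l2norm_sq[of y "{..<M}"] l2norm_nonneg[of y]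
  by (simp add: real_le_lsqrt sum_nonneg)

lemma
  assumes x: "x \<in> l2" and y: "y \<in> l2"
  shows l2_add_scaled: "(\<lambda>n. x n + c * y n) \<in> l2"
    and l2norm_add_scaled_le: "l2norm (\<lambda>n. x n + c * y n) \<le> l2norm x + cmod c * l2norm y"
proof -
  have partial_sums: "(\<Sum>m<M. (cmod (x m + c * y m))\<^sup>2) \<le> (l2norm x + cmod c * l2norm y)\<^sup>2" for M
  proof -
    have "L2_set (\<lambda>m. cmod (x m + c * y m)) {..<M}
        \<le> L2_set (\<lambda>m. cmod (x m) + cmod c * cmod (y m)) {..<M}"
      by (rule L2_set_mono) (auto intro: order.trans[OF norm_triangle_ineq] simp: norm_mult)
    also have "\<dots> \<le> L2_set (\<lambda>m. cmod (x m)) {..<M} + cmod c * L2_set (\<lambda>m. cmod (y m)) {..<M}"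
      using L2_set_triangle_ineq[of "\<lambda>m. cmod (x m)" "\<lambda>m. cmod c * cmod (y m)" "{..<M}"]
      by (simp add: L2_set_right_distrib)
    also have "\<dots> \<le> l2norm x + cmod c * l2norm y"
      by (intro add_mono mult_left_mono L2_set_le_l2norm x y) simp
    finally have "L2_set (\<lambda>m. cmod (x m + c * y m)) {..<M} \<le> l2norm x + cmod c * l2norm y" .
    then have "(L2_set (\<lambda>m. cmod (x m + c * y m)) {..<M})\<^sup>2 \<le> (l2norm x + cmod c * l2norm y)\<^sup>2"
      by (simp add: L2_set_nonneg power_mono)
    then show ?thesis by (simp add: L2_set_def sum_nonneg)
  qed
  have "0 \<le> l2norm x + cmod c * l2norm y" using l2norm_nonneg x y by auto
  then show "(\<lambda>n. x n + c * y n) \<in> l2"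
    and "l2norm (\<lambda>n. x n + c * y n) \<le> l2norm x + cmod c * l2norm y"
    using l2I_partial_sums[OF partial_sums] l2norm_le_partial_sums[OF partial_sums] by auto
qed

lemma
  assumes "y \<in> l2"
  shows l2_scaled: "(\<lambda>n. c * y n) \<in> l2"
    and l2norm_scaled: "l2norm (\<lambda>n. c * y n) = cmod c * l2norm y"
proof -
  have summable: "summable (\<lambda>n. (cmod (y n))\<^sup>2)" using assms by (simp add: l2_def)
  have sq: "(\<lambda>n. (cmod (c * y n))\<^sup>2) = (\<lambda>n. (cmod c)\<^sup>2 * (cmod (y n))\<^sup>2)"
    by (simp add: norm_mult power_mult_distrib)
  show "(\<lambda>n. c * y n) \<in> l2"
    unfolding l2_def mem_Collect_eq sq by (rule summable_mult[OF summable])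
  show "l2norm (\<lambda>n. c * y n) = cmod c * l2norm y"
    unfolding l2norm_def sq suminf_mult[OF summable] by (simp add: real_sqrt_mult)
qed

lemma l2_zero: "(\<lambda>n. 0) \<in> l2" and l2norm_zero: "l2norm (\<lambda>n. 0) = 0"
  by (auto simp: l2_def l2norm_def)

lemma l2norm_eq_zero: "y \<in> l2 \<Longrightarrow> l2norm y = 0 \<Longrightarrow> y = (\<lambda>n. 0)"
  using cmod_le_l2norm by (metis norm_le_zero_iff)

lemma l2_unitvec: "unitvec n \<in> l2" and l2norm_unitvec: "l2norm (unitvec n) = 1"
proof -
  have "(\<lambda>m. (cmod (unitvec n m))\<^sup>2) = (\<lambda>m. if m = n then 1 else 0)"
    by (auto simp: unitvec_def)
  moreover have "(\<lambda>m. if m = n then 1 else 0::real) sums 1"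
    using sums_single[of n "\<lambda>_. 1::real"] by simp
  ultimately show "unitvec n \<in> l2" "l2norm (unitvec n) = 1"
    by (auto simp: l2_def l2norm_def sums_iff)
qed

lemma
  assumes "y \<in> l2" "cmod l = 1"
  shows l2_Wop: "Wop l y \<in> l2" and l2norm_Wop: "l2norm (Wop l y) = l2norm y"
proof -
  have "(\<lambda>n. (cmod (Wop l y n))\<^sup>2) = (\<lambda>n. (cmod (y n))\<^sup>2)"
    using assms by (simp add: Wop_def norm_mult norm_power)
  then show "Wop l y \<in> l2" "l2norm (Wop l y) = l2norm y"
    using assms by (auto simp: l2_def l2norm_def)
qed

section \<open>Bounded operators and the operator norm\<close>

lemma bounded_op_l2: "bounded_op Q \<Longrightarrow> x \<in> l2 \<Longrightarrow> Q x \<in> l2"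
  unfolding bounded_op_def by blast

lemma bounded_op_add_scaled:
  "bounded_op Q \<Longrightarrow> x \<in> l2 \<Longrightarrow> y \<in> l2 \<Longrightarrow> Q (\<lambda>n. x n + c * y n) = (\<lambda>n. Q x n + c * Q y n)"
  unfolding bounded_op_def by blast

lemma bounded_op_zero:
  assumes "bounded_op Q"
  shows "Q (\<lambda>n. 0) = (\<lambda>n. 0)"
proof -
  have "Q (\<lambda>n. 0 + 1 * 0) = (\<lambda>n. Q (\<lambda>n. 0) n + 1 * Q (\<lambda>n. 0) n)"
    using bounded_op_add_scaled[OF assms l2_zero l2_zero] .
  then show ?thesis by (simp add: fun_eq_iff)
qed

lemma bounded_op_scaled: "bounded_op Q \<Longrightarrow> x \<in> l2 \<Longrightarrow> Q (\<lambda>n. c * x n) = (\<lambda>n. c * Q x n)"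
  using bounded_op_add_scaled[of Q "\<lambda>n. 0" x c] by (simp add: l2_zero bounded_op_zero)

lemma bounded_op_diff:
  assumes S: "bounded_op S" and Q: "bounded_op Q"
  shows "bounded_op (\<lambda>x m. S x m - Q x m)"
proof -
  have diff: "(\<lambda>m. S x m - Q x m) = (\<lambda>m. S x m + (-1) * Q x m)" for x by simp
  obtain C1 where C1: "\<forall>x\<in>l2. l2norm (S x) \<le> C1 * l2norm x"
    using S unfolding bounded_op_def by blast
  obtain C2 where C2: "\<forall>x\<in>l2. l2norm (Q x) \<le> C2 * l2norm x"
    using Q unfolding bounded_op_def by blast
  have bound: "l2norm (\<lambda>m. S x m - Q x m) \<le> (C1 + C2) * l2norm x" if x: "x \<in> l2" for x
  proof -
    have "l2norm (\<lambda>m. S x m - Q x m) \<le> l2norm (S x) + l2norm (Q x)"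
      using l2norm_add_scaled_le[OF bounded_op_l2[OF S x] bounded_op_l2[OF Q x], of "-1"]
      unfolding diff by simp
    also have "\<dots> \<le> (C1 + C2) * l2norm x" using C1 C2 x by (simp add: distrib_right add_mono)
    finally show ?thesis .
  qed
  have mem: "(\<lambda>m. S x m - Q x m) \<in> l2" if "x \<in> l2" for x
    unfolding diff by (rule l2_add_scaled[OF bounded_op_l2[OF S that] bounded_op_l2[OF Q that]])
  have lin: "(\<lambda>m. S (\<lambda>n. x n + c * y n) m - Q (\<lambda>n. x n + c * y n) m)
      = (\<lambda>n. (S x n - Q x n) + c * (S y n - Q y n))" if "x \<in> l2" "y \<in> l2" for x y c
    using bounded_op_add_scaled[OF S that] bounded_op_add_scaled[OF Q that]
    by (simp add: algebra_simps)
  show ?thesis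
    unfolding bounded_op_def by (intro conjI ballI allI exI[of _ "C1 + C2"]) (simp_all add: mem lin bound)
qed

lemma l2norm_le_opnorm:
  assumes Q: "bounded_op Q" and x: "x \<in> l2"
  shows "l2norm (Q x) \<le> opnorm Q * l2norm x"
proof -
  obtain C where C: "\<forall>x\<in>l2. l2norm (Q x) \<le> C * l2norm x"
    using Q unfolding bounded_op_def by blast
  have bdd: "bdd_above {l2norm (Q x) | x. x \<in> l2 \<and> l2norm x \<le> 1}"
  proof (rule bdd_aboveI[where M="\<bar>C\<bar>"])
    fix r assume "r \<in> {l2norm (Q x) | x. x \<in> l2 \<and> l2norm x \<le> 1}"
    then obtain y where y: "y \<in> l2" "l2norm y \<le> 1" "r = l2norm (Q y)" by blast
    have "C * l2norm y \<le> \<bar>C\<bar> * l2norm y"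
      using l2norm_nonneg[OF y(1)] by (simp add: mult_right_mono)
    also have "\<dots> \<le> \<bar>C\<bar>" using y(2) l2norm_nonneg[OF y(1)] by (simp add: mult_left_le)
    finally have "C * l2norm y \<le> \<bar>C\<bar>" .
    then show "r \<le> \<bar>C\<bar>" using C y by force
  qed
  show ?thesis
  proof (cases "l2norm x = 0")
    case True
    then have "x = (\<lambda>n. 0)" by (rule l2norm_eq_zero[OF x])
    then show ?thesis using True bounded_op_zero[OF Q] by (simp add: l2norm_zero)
  next
    case False
    define r where "r = l2norm x"
    have r: "r > 0" using False l2norm_nonneg[OF x] by (simp add: r_def)
    define z where "z = (\<lambda>n. complex_of_real (1/r) * x n)"
    have z: "z \<in> l2" "l2norm z = 1"
      using l2_scaled[OF x, of "complex_of_real (1/r)"] l2norm_scaled[OF x, of "complex_of_real (1/r)"] r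
      by (auto simp: z_def r_def norm_divide)
    have "l2norm (Q x) / r = l2norm (Q z)"
      unfolding z_def bounded_op_scaled[OF Q x] l2norm_scaled[OF bounded_op_l2[OF Q x]]
      using r by (simp add: norm_divide)
    also have "\<dots> \<le> opnorm Q"
      unfolding opnorm_def by (rule cSup_upper[OF _ bdd]) (use z in auto)
    finally show ?thesis using r by (simp add: r_def field_simps)
  qed
qed

lemma opnorm_nonneg: "bounded_op Q \<Longrightarrow> 0 \<le> opnorm Q"
  using l2norm_le_opnorm[of Q "unitvec 0"] l2_unitvec l2norm_unitvec
    l2norm_nonneg[OF bounded_op_l2[of Q "unitvec 0"]]
  by fastforce

lemma opnorm_le:
  assumes "\<And>x. x \<in> l2 \<Longrightarrow> l2norm (Q x) \<le> B * l2norm x" and "0 \<le> B"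
  shows "opnorm Q \<le> B"
  unfolding opnorm_def
proof (rule cSup_least)
  show "{l2norm (Q x) | x. x \<in> l2 \<and> l2norm x \<le> 1} \<noteq> {}"
    using l2_zero l2norm_zero by fastforce
next
  fix r assume "r \<in> {l2norm (Q x) | x. x \<in> l2 \<and> l2norm x \<le> 1}"
  then obtain x where x: "x \<in> l2" "l2norm x \<le> 1" and r: "r = l2norm (Q x)" by blast
  then have "r \<le> B * l2norm x" using assms(1) by simp
  also have "\<dots> \<le> B" using x(2) assms(2) by (simp add: mult_left_le)
  finally show "r \<le> B" .
qed

section \<open>Powers of the weighted shift\<close>

definition shift_weight :: "(nat \<Rightarrow> complex) \<Rightarrow> nat \<Rightarrow> nat \<Rightarrow> complex" where
  "shift_weight a k j = (\<Prod>i<k. a (j + i))"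

lemma wshift_power_apply:
  "(wshift a ^^ k) x m = (if k \<le> m then shift_weight a k (m - k) * x (m - k) else 0)"
proof (induction k arbitrary: m)
  case 0
  then show ?case by (simp add: shift_weight_def)
next
  case (Suc k)
  show ?case
  proof (cases "Suc k \<le> m")
    case True
    then have "shift_weight a (Suc k) (m - Suc k) = shift_weight a k (m - Suc k) * a (m - 1)"
      unfolding shift_weight_def prod.lessThan_Suc by simp
    then show ?thesis using True Suc.IH[of "m - 1"] by (simp add: wshift_def)
  next
    case False
    then show ?thesis using Suc by (auto simp: wshift_def)
  qed
qed

lemma polyop_unitvec_0:
  "polyop a c N (unitvec 0) k = (if k \<in> {1..N} then c k else 0) * shift_weight a k 0"
proof -
  have "polyop a c N (unitvec 0) k = (\<Sum>j=1..N. if j = k then c k * shift_weight a k 0 else 0)"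
    unfolding polyop_def wshift_power_apply by (rule sum.cong) (auto simp: unitvec_def)
  then show ?thesis by simp
qed

lemma shift_weight_le:
  assumes dec: "decseq (\<lambda>n. cmod (a n))" and k: "1 \<le> k"
  shows "cmod (shift_weight a k j) * cmod (a 0) \<le> cmod (a j) * cmod (shift_weight a k 0)"
proof -
  obtain k' where k': "k = Suc k'" using k by (cases k) auto
  have "cmod (shift_weight a k j) = cmod (a j) * (\<Prod>i<k'. cmod (a (j + Suc i)))"
    unfolding shift_weight_def k' prod.lessThan_Suc_shift by (simp add: norm_mult prod_norm)
  also have "\<dots> \<le> cmod (a j) * (\<Prod>i<k'. cmod (a (Suc i)))"
    by (intro mult_left_mono prod_mono) (auto intro: decseqD[OF dec])
  finally have "cmod (shift_weight a k j) * cmod (a 0)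
      \<le> cmod (a j) * (cmod (a 0) * (\<Prod>i<k'. cmod (a (Suc i))))"
    by (simp add: mult_left_mono mult_ac)
  also have "cmod (a 0) * (\<Prod>i<k'. cmod (a (Suc i))) = cmod (shift_weight a k 0)"
    unfolding shift_weight_def k' prod.lessThan_Suc_shift by (simp add: norm_mult prod_norm)
  finally show ?thesis .
qed

lemma shift_weight_sq_le:
  assumes "a 0 \<noteq> 0" and "decseq (\<lambda>n. cmod (a n))" and "1 \<le> k"
  shows "(cmod (shift_weight a k j))\<^sup>2
    \<le> (cmod (a j))\<^sup>2 * (cmod (shift_weight a k 0))\<^sup>2 / (cmod (a 0))\<^sup>2"
proof -
  have "(cmod (shift_weight a k j) * cmod (a 0))\<^sup>2 \<le> (cmod (a j) * cmod (shift_weight a k 0))\<^sup>2"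
    using shift_weight_le[OF assms(2,3)] by (intro power_mono) auto
  then show ?thesis using assms(1) by (simp add: power_mult_distrib field_simps)
qed

section \<open>Polynomials in the weighted shift\<close>

lemma sum_reflected_le:
  fixes h :: "nat \<Rightarrow> real"
  assumes "\<And>j. 0 \<le> h j"
  shows "(\<Sum>k=1..n. if k \<le> m then h (m - k) else 0) \<le> (\<Sum>j<Suc m. h j)"
proof -
  have "(\<Sum>k=1..n. if k \<le> m then h (m - k) else 0) = (\<Sum>k\<in>{1..n} \<inter> {..m}. h (m - k))"
    by (rule sum.inter_filter[symmetric, THEN trans]) (auto intro!: sum.cong)
  also have "\<dots> \<le> (\<Sum>k<Suc m. h (m - k))"
    by (rule sum_mono2) (auto simp: assms)
  also have "\<dots> = (\<Sum>j<Suc m. h j)"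
    using sum.nat_diff_reindex[of h "Suc m"] by simp
  finally show ?thesis .
qed

lemma sum_lessThan_shifted:
  fixes f :: "nat \<Rightarrow> real"
  shows "(\<Sum>m<M. if k \<le> m then f (m - k) else 0) = (\<Sum>j<M - k. f j)"
  by (induction M) (simp_all add: Suc_diff_le)

lemma polyop_coord_sq_le:
  assumes a0: "a 0 \<noteq> 0" and dec: "decseq (\<lambda>n. cmod (a n))" and x: "x \<in> l2"
  shows "(cmod (polyop a d n x m))\<^sup>2
    \<le> (\<Sum>k=1..n. if k \<le> m then (cmod (d k))\<^sup>2 * (cmod (shift_weight a k 0))\<^sup>2 * (cmod (a (m - k)))\<^sup>2
        else 0) / (cmod (a 0))\<^sup>2 * (l2norm x)\<^sup>2"
proof -
  define f where "f k = (if k \<le> m then cmod (d k * shift_weight a k (m - k)) else 0)" for k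
  define g where "g k = (if k \<le> m then cmod (x (m - k)) else 0)" for k
  have "cmod (polyop a d n x m)
      = cmod (\<Sum>k=1..n. if k \<le> m then d k * shift_weight a k (m - k) * x (m - k) else 0)"
    unfolding polyop_def wshift_power_apply by (intro arg_cong[where f=cmod] sum.cong) auto
  also have "\<dots> \<le> (\<Sum>k=1..n. cmod (if k \<le> m then d k * shift_weight a k (m - k) * x (m - k) else 0))"
    by (rule norm_sum)
  also have "\<dots> = (\<Sum>k=1..n. f k * g k)"
    by (rule sum.cong) (auto simp: f_def g_def norm_mult)
  finally have "(cmod (polyop a d n x m))\<^sup>2 \<le> (\<Sum>k=1..n. f k * g k)\<^sup>2"
    by (simp add: power_mono)
  also have "\<dots> \<le> (\<Sum>k=1..n. (f k)\<^sup>2) * (\<Sum>k=1..n. (g k)\<^sup>2)"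
    by (rule Cauchy_Schwarz_ineq_sum)
  also have "\<dots> \<le> (\<Sum>k=1..n. if k \<le> m then (cmod (d k))\<^sup>2 * (cmod (shift_weight a k 0))\<^sup>2
        * (cmod (a (m - k)))\<^sup>2 else 0) / (cmod (a 0))\<^sup>2 * (l2norm x)\<^sup>2"
  proof (rule mult_mono)
    show "(\<Sum>k=1..n. (f k)\<^sup>2) \<le> (\<Sum>k=1..n. if k \<le> m then (cmod (d k))\<^sup>2 * (cmod (shift_weight a k 0))\<^sup>2
        * (cmod (a (m - k)))\<^sup>2 else 0) / (cmod (a 0))\<^sup>2"
      unfolding sum_divide_distrib
    proof (rule sum_mono)
      fix k assume k: "k \<in> {1..n}"
      show "(f k)\<^sup>2 \<le> (if k \<le> m then (cmod (d k))\<^sup>2 * (cmod (shift_weight a k 0))\<^sup>2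
          * (cmod (a (m - k)))\<^sup>2 else 0) / (cmod (a 0))\<^sup>2"
      proof (cases "k \<le> m")
        case True
        have "(cmod (d k))\<^sup>2 * (cmod (shift_weight a k (m - k)))\<^sup>2
            \<le> (cmod (d k))\<^sup>2 * ((cmod (a (m - k)))\<^sup>2 * (cmod (shift_weight a k 0))\<^sup>2 / (cmod (a 0))\<^sup>2)"
          using shift_weight_sq_le[OF a0 dec, of k "m - k"] k by (intro mult_left_mono) auto
        then show ?thesis using True by (simp add: f_def norm_mult power_mult_distrib mult_ac)
      qed (simp add: f_def)
    qed
    have "(\<Sum>k=1..n. (g k)\<^sup>2) = (\<Sum>k=1..n. if k \<le> m then (cmod (x (m - k)))\<^sup>2 else 0)"
      by (rule sum.cong) (auto simp: g_def)
    also have "\<dots> \<le> (\<Sum>j<Suc m. (cmod (x j))\<^sup>2)"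
      by (rule sum_reflected_le) simp
    also have "\<dots> \<le> (l2norm x)\<^sup>2"
      by (rule sum_sq_le_l2norm_sq[OF x]) simp
    finally show "(\<Sum>k=1..n. (g k)\<^sup>2) \<le> (l2norm x)\<^sup>2" .
  qed (simp_all add: sum_nonneg)
  finally show ?thesis .
qed

lemma
  assumes a0: "a 0 \<noteq> 0" and dec: "decseq (\<lambda>n. cmod (a n))"
    and summable: "summable (\<lambda>n. (cmod (a n))\<^sup>2)" and x: "x \<in> l2"
  shows l2_polyop: "polyop a d n x \<in> l2"
    and l2norm_polyop_le: "l2norm (polyop a d n x) \<le> sqrt (\<Sum>j. (cmod (a j))\<^sup>2) / cmod (a 0)
          * sqrt (\<Sum>k=1..n. (cmod (d k))\<^sup>2 * (cmod (shift_weight a k 0))\<^sup>2) * l2norm x"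
proof -
  define A where "A = (\<Sum>j. (cmod (a j))\<^sup>2)"
  define D where "D k = (cmod (d k))\<^sup>2 * (cmod (shift_weight a k 0))\<^sup>2" for k
  have A: "0 \<le> A" unfolding A_def by (rule suminf_nonneg[OF summable]) simp
  have D: "0 \<le> sum D {1..n}" unfolding D_def by (rule sum_nonneg) simp
  have "(\<Sum>m<M. (cmod (polyop a d n x m))\<^sup>2)
      \<le> (sqrt A / cmod (a 0) * sqrt (sum D {1..n}) * l2norm x)\<^sup>2" for M
  proof -
    have "(\<Sum>m<M. (cmod (polyop a d n x m))\<^sup>2)
        \<le> (\<Sum>m<M. (\<Sum>k=1..n. if k \<le> m then D k * (cmod (a (m - k)))\<^sup>2 else 0)
            / (cmod (a 0))\<^sup>2 * (l2norm x)\<^sup>2)"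
      unfolding D_def by (rule sum_mono, rule polyop_coord_sq_le[OF a0 dec x])
    also have "\<dots> = (\<Sum>k=1..n. D k * (\<Sum>m<M. if k \<le> m then (cmod (a (m - k)))\<^sup>2 else 0))
        / (cmod (a 0))\<^sup>2 * (l2norm x)\<^sup>2"
      by (simp add: sum_distrib_right sum_distrib_left sum_divide_distrib sum.swap[of _ "{..<M}"]
          if_distrib cong: if_cong)
    also have "\<dots> \<le> (\<Sum>k=1..n. D k * A) / (cmod (a 0))\<^sup>2 * (l2norm x)\<^sup>2"
    proof (intro mult_right_mono divide_right_mono sum_mono mult_left_mono)
      fix k
      have "(\<Sum>m<M. if k \<le> m then (cmod (a (m - k)))\<^sup>2 else 0) = (\<Sum>j<M - k. (cmod (a j))\<^sup>2)"
        by (rule sum_lessThan_shifted)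
      also have "\<dots> \<le> A" unfolding A_def by (rule sum_le_suminf[OF summable]) auto
      finally show "(\<Sum>m<M. if k \<le> m then (cmod (a (m - k)))\<^sup>2 else 0) \<le> A" .
    qed (simp_all add: D_def)
    also have "\<dots> = (sqrt A / cmod (a 0) * sqrt (sum D {1..n}) * l2norm x)\<^sup>2"
      using A D by (simp add: power_mult_distrib power_divide sum_distrib_right[symmetric])
    finally show ?thesis .
  qed
  moreover have "0 \<le> sqrt A / cmod (a 0) * sqrt (sum D {1..n}) * l2norm x"
    using l2norm_nonneg[OF x] A D by simp
  ultimately show "polyop a d n x \<in> l2"
    and "l2norm (polyop a d n x) \<le> sqrt (\<Sum>j. (cmod (a j))\<^sup>2) / cmod (a 0)
          * sqrt (\<Sum>k=1..n. (cmod (d k))\<^sup>2 * (cmod (shift_weight a k 0))\<^sup>2) * l2norm x"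
    unfolding A_def D_def by (fact l2I_partial_sums, fact l2norm_le_partial_sums)
qed

lemma bounded_op_polyop:
  assumes "a 0 \<noteq> 0" "decseq (\<lambda>n. cmod (a n))" "summable (\<lambda>n. (cmod (a n))\<^sup>2)"
  shows "bounded_op (polyop a c N)"
proof -
  have "polyop a c N (\<lambda>n. x n + e * y n) = (\<lambda>m. polyop a c N x m + e * polyop a c N y m)" for x y e
    unfolding polyop_def wshift_power_apply
    by (auto simp: sum_distrib_left sum.distrib[symmetric] algebra_simps intro!: sum.cong)
  then show ?thesis
    unfolding bounded_op_def using l2_polyop[OF assms] l2norm_polyop_le[OF assms] by blast
qed

section \<open>Fourier coefficients\<close>

lemma has_integral_cis_int:
  fixes n :: int
  shows "((\<lambda>t. cis (of_int n * t)) has_integral (if n = 0 then complex_of_real (2*pi) else 0)) {0..2*pi}"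
proof (cases "n = 0")
  case True
  then show ?thesis using has_integral_const_real[of "1::complex" 0 "2*pi"]
    by (simp add: scaleR_conv_of_real)
next
  case False
  have "((\<lambda>t. cis (of_int n * t) / (\<i> * of_int n)) has_vector_derivative cis (of_int n * t))
      (at t within {0..2*pi})" for t
  proof -
    have "((\<lambda>t. cis (of_int n * t)) has_vector_derivative (\<i> * of_int n * cis (of_int n * t)))
        (at t within {0..2*pi})"
      unfolding has_vector_derivative_def
      by (auto intro!: derivative_eq_intros simp: scaleR_conv_of_real algebra_simps)
    from has_vector_derivative_divide[OF this, of "\<i> * of_int n"] False show ?thesis by simp
  qed
  then have "((\<lambda>t. cis (of_int n * t)) has_integral
      (cis (of_int n * (2*pi)) / (\<i> * of_int n) - cis (of_int n * 0) / (\<i> * of_int n))) {0..2*pi}"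
    by (intro fundamental_theorem_of_calculus) auto
  moreover have "cis (of_int n * (2*pi)) = 1"
    using cis_multiple_2pi[of "of_int n"] by (simp add: mult.commute mult.left_commute)
  ultimately show ?thesis using False by simp
qed

lemma gamma_act_polyop:
  "gamma_act (cis t) (polyop a c N) x m * inverse (cis t) ^ k
     = (\<Sum>j=1..N. c j * (wshift a ^^ j) x m * cis (of_int (int j - int k) * t))"
proof -
  have "gamma_act (cis t) (polyop a c N) x m = (\<Sum>j=1..N. c j * (wshift a ^^ j) x m * cis (real j * t))"
    unfolding gamma_act_def Wop_def polyop_def wshift_power_apply sum_distrib_left
  proof (rule sum.cong[OF refl])
    fix j
    show "cis t ^ m * (c j * (if j \<le> m then shift_weight a j (m - j) * (cnj (cis t) ^ (m - j) * x (m - j)) else 0))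
        = c j * (if j \<le> m then shift_weight a j (m - j) * x (m - j) else 0) * cis (real j * t)"
    proof (cases "j \<le> m")
      case True
      then have "cis t ^ m * cnj (cis t) ^ (m - j) = cis (real j * t)"
        unfolding cis_cnj Complex.DeMoivre cis_mult
        by (intro arg_cong[where f=cis]) (simp add: of_nat_diff algebra_simps)
      then show ?thesis using True by (simp add: algebra_simps)
    qed simp
  qed
  moreover have "inverse (cis t) ^ k = cis (- (real k * t))" by (simp add: Complex.DeMoivre)
  moreover have "cis (real j * t) * cis (- (real k * t)) = cis (of_int (int j - int k) * t)" for j
    by (simp add: cis_mult algebra_simps)
  ultimately show ?thesis by (simp add: sum_distrib_right mult.assoc)
qed

lemma polyop_integrand_has_integral:
  "((\<lambda>t. gamma_act (cis t) (polyop a c N) x m * inverse (cis t) ^ k) has_integral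
      complex_of_real (2*pi) * ((if k \<in> {1..N} then c k else 0) * (wshift a ^^ k) x m)) {0..2*pi}"
proof -
  have "((\<lambda>t. \<Sum>j=1..N. c j * (wshift a ^^ j) x m * cis (of_int (int j - int k) * t)) has_integral
      (\<Sum>j=1..N. c j * (wshift a ^^ j) x m * (if int j - int k = 0 then complex_of_real (2*pi) else 0)))
      {0..2*pi}"
    by (intro has_integral_sum has_integral_mult_right has_integral_cis_int) auto
  moreover have "(\<Sum>j=1..N. c j * (wshift a ^^ j) x m * (if int j - int k = 0 then complex_of_real (2*pi) else 0))
      = complex_of_real (2*pi) * ((if k \<in> {1..N} then c k else 0) * (wshift a ^^ k) x m)"
    by (simp add: if_distrib sum.delta' cong: if_cong)
  ultimately show ?thesis unfolding gamma_act_polyop by simp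
qed

lemma gamma_act_diff_le:
  assumes S: "bounded_op S" and P: "bounded_op P" and x: "x \<in> l2"
  shows "cmod (gamma_act (cis t) S x m * inverse (cis t) ^ k - gamma_act (cis t) P x m * inverse (cis t) ^ k)
         \<le> opnorm (\<lambda>x m. S x m - P x m) * l2norm x"
proof -
  define w where "w = Wop (cnj (cis t)) x"
  have w: "w \<in> l2" "l2norm w = l2norm x"
    using l2_Wop[OF x] l2norm_Wop[OF x] by (auto simp: w_def)
  have SP: "bounded_op (\<lambda>x m. S x m - P x m)" by (rule bounded_op_diff[OF S P])
  have "cmod (gamma_act (cis t) S x m * inverse (cis t) ^ k - gamma_act (cis t) P x m * inverse (cis t) ^ k)
      = cmod (S w m - P w m)"
    unfolding gamma_act_def w_def
    by (simp add: Wop_def right_diff_distrib[symmetric] left_diff_distrib[symmetric] norm_mult norm_power)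
  also have "\<dots> \<le> l2norm (\<lambda>m. S w m - P w m)"
    by (rule cmod_le_l2norm[OF bounded_op_l2[OF SP w(1)]])
  also have "\<dots> \<le> opnorm (\<lambda>x m. S x m - P x m) * l2norm x"
    using l2norm_le_opnorm[OF SP w(1)] w(2) by simp
  finally show ?thesis .
qed

locale weighted_shift_algebra_element =
  fixes a :: "nat \<Rightarrow> complex" and S :: "(nat \<Rightarrow> complex) \<Rightarrow> nat \<Rightarrow> complex"
  assumes nonzero: "\<And>n. a n \<noteq> 0"
    and decreasing: "decseq (\<lambda>n. cmod (a n))"
    and square_summable: "summable (\<lambda>n. (cmod (a n))\<^sup>2)"
    and in_alg_T: "S \<in> alg_T a"
begin

lemma bounded_op_S: "bounded_op S"
  using in_alg_T by (simp add: alg_T_def)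

lemma bounded_op_S_minus_polyop: "bounded_op (\<lambda>x m. S x m - polyop a c N x m)"
  by (rule bounded_op_diff[OF bounded_op_S bounded_op_polyop[OF nonzero decreasing square_summable]])

lemma polyop_approx: "e > 0 \<Longrightarrow> \<exists>c N. opnorm (\<lambda>x m. S x m - polyop a c N x m) < e"
  using in_alg_T by (simp add: alg_T_def)

lemma gamma_act_integrable:
  assumes x: "x \<in> l2"
  shows "(\<lambda>t. gamma_act (cis t) S x m * inverse (cis t) ^ k) integrable_on {0..2*pi}"
proof -
  have "(\<lambda>t. gamma_act (cis t) S x m * inverse (cis t) ^ k) integrable_on cbox 0 (2*pi)"
  proof (rule integrable_uniform_limit)
    fix e :: real assume e: "e > 0"
    have L: "0 \<le> l2norm x" by (rule l2norm_nonneg[OF x])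
    obtain c N where approx: "opnorm (\<lambda>x m. S x m - polyop a c N x m) < e / (l2norm x + 1)"
      using polyop_approx[of "e / (l2norm x + 1)"] e L by auto
    have "opnorm (\<lambda>x m. S x m - polyop a c N x m) * l2norm x \<le> e / (l2norm x + 1) * l2norm x"
      using approx L by (intro mult_right_mono) auto
    also have "\<dots> \<le> e" using e L by (simp add: field_simps)
    finally have close: "opnorm (\<lambda>x m. S x m - polyop a c N x m) * l2norm x \<le> e" .
    show "\<exists>g. (\<forall>t\<in>cbox 0 (2*pi). norm (gamma_act (cis t) S x m * inverse (cis t) ^ k - g t) \<le> e)
        \<and> g integrable_on cbox 0 (2*pi)"
    proof (intro exI conjI ballI)
      fix t
      show "norm (gamma_act (cis t) S x m * inverse (cis t) ^ k
          - gamma_act (cis t) (polyop a c N) x m * inverse (cis t) ^ k) \<le> e"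
        using gamma_act_diff_le[OF bounded_op_S bounded_op_polyop[OF nonzero decreasing square_summable] x]
          close order.trans by blast
      show "(\<lambda>t. gamma_act (cis t) (polyop a c N) x m * inverse (cis t) ^ k) integrable_on cbox 0 (2*pi)"
        using polyop_integrand_has_integral unfolding box_real integrable_on_def by blast
    qed
  qed
  then show ?thesis by simp
qed

lemma fourier_int_polyop_diff_le:
  assumes x: "x \<in> l2"
  shows "cmod (fourier_int S k x m - (if k \<in> {1..N} then c k else 0) * (wshift a ^^ k) x m)
    \<le> opnorm (\<lambda>x m. S x m - polyop a c N x m) * l2norm x"
proof -
  define I where "I = integral {0..2*pi} (\<lambda>t. gamma_act (cis t) S x m * inverse (cis t) ^ k)"
  define J where "J = complex_of_real (2*pi) * ((if k \<in> {1..N} then c k else 0) * (wshift a ^^ k) x m)"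
  define B where "B = opnorm (\<lambda>x m. S x m - polyop a c N x m) * l2norm x"
  have B: "0 \<le> B"
    unfolding B_def using opnorm_nonneg[OF bounded_op_S_minus_polyop] l2norm_nonneg[OF x] by simp
  have "((\<lambda>t. gamma_act (cis t) S x m * inverse (cis t) ^ k
      - gamma_act (cis t) (polyop a c N) x m * inverse (cis t) ^ k) has_integral I - J) {0..2*pi}"
    unfolding I_def J_def
    by (intro has_integral_diff integrable_integral gamma_act_integrable[OF x] polyop_integrand_has_integral)
  then have "norm (I - J) \<le> B * (2*pi)"
    using has_integral_bound[OF B, of _ "I - J" 0 "2*pi"]
      gamma_act_diff_le[OF bounded_op_S bounded_op_polyop[OF nonzero decreasing square_summable] x]
    by (simp add: B_def)
  moreover have "I - J = complex_of_real (2*pi)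
      * (fourier_int S k x m - (if k \<in> {1..N} then c k else 0) * (wshift a ^^ k) x m)"
    unfolding I_def J_def fourier_int_def by (simp add: field_simps)
  ultimately show ?thesis by (simp add: B_def norm_mult mult.commute)
qed

definition coeff :: "nat \<Rightarrow> complex" where
  "coeff k = S (unitvec 0) k / shift_weight a k 0"

lemma shift_weight_nonzero: "shift_weight a k j \<noteq> 0"
  unfolding shift_weight_def using nonzero by simp

lemma S_minus_polyop_unitvec_0:
  "S (unitvec 0) k - polyop a c N (unitvec 0) k
    = (coeff k - (if k \<in> {1..N} then c k else 0)) * shift_weight a k 0"
  unfolding coeff_def polyop_unitvec_0 using shift_weight_nonzero[of k 0]
  by (simp add: left_diff_distrib)

lemma coeff_diff_le:
  "cmod (coeff k - (if k \<in> {1..N} then c k else 0)) * cmod (shift_weight a k 0)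
    \<le> opnorm (\<lambda>x m. S x m - polyop a c N x m)"
proof -
  let ?Q = "\<lambda>x m. S x m - polyop a c N x m"
  have "cmod (coeff k - (if k \<in> {1..N} then c k else 0)) * cmod (shift_weight a k 0)
      = cmod (?Q (unitvec 0) k)"
    by (simp add: S_minus_polyop_unitvec_0 norm_mult)
  also have "\<dots> \<le> l2norm (?Q (unitvec 0))"
    by (rule cmod_le_l2norm[OF bounded_op_l2[OF bounded_op_S_minus_polyop l2_unitvec]])
  also have "\<dots> \<le> opnorm ?Q"
    using l2norm_le_opnorm[OF bounded_op_S_minus_polyop l2_unitvec] by (simp add: l2norm_unitvec)
  finally show ?thesis .
qed

lemma fourier_int_eq:
  assumes x: "x \<in> l2"
  shows "fourier_int S k x m = coeff k * (wshift a ^^ k) x m"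
proof -
  define M where "M = l2norm x + cmod ((wshift a ^^ k) x m) / cmod (shift_weight a k 0)"
  have M: "0 \<le> M" unfolding M_def using l2norm_nonneg[OF x] by simp
  have "cmod (fourier_int S k x m - coeff k * (wshift a ^^ k) x m) \<le> 0 + e" if e: "e > 0" for e
  proof -
    obtain c N where approx: "opnorm (\<lambda>x m. S x m - polyop a c N x m) < e / (M + 1)"
      using polyop_approx[of "e / (M + 1)"] e M by auto
    define \<delta> where "\<delta> = opnorm (\<lambda>x m. S x m - polyop a c N x m)"
    define c' where "c' = (if k \<in> {1..N} then c k else 0)"
    have "fourier_int S k x m - coeff k * (wshift a ^^ k) x m
        = (fourier_int S k x m - c' * (wshift a ^^ k) x m) - (coeff k - c') * (wshift a ^^ k) x m"
      by (simp add: algebra_simps)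
    then have "cmod (fourier_int S k x m - coeff k * (wshift a ^^ k) x m)
        \<le> cmod (fourier_int S k x m - c' * (wshift a ^^ k) x m)
          + cmod (coeff k - c') * cmod ((wshift a ^^ k) x m)"
      using norm_triangle_ineq4[of "fourier_int S k x m - c' * (wshift a ^^ k) x m"
          "(coeff k - c') * (wshift a ^^ k) x m"]
      by (simp only: norm_mult)
    also have "\<dots> \<le> \<delta> * l2norm x + \<delta> / cmod (shift_weight a k 0) * cmod ((wshift a ^^ k) x m)"
    proof (intro add_mono mult_right_mono)
      show "cmod (coeff k - c') \<le> \<delta> / cmod (shift_weight a k 0)"
        using coeff_diff_le[of k N c] shift_weight_nonzero[of k 0]
        by (simp add: c'_def \<delta>_def field_simps)
    qed (use fourier_int_polyop_diff_le[OF x] in \<open>simp_all add: c'_def \<delta>_def\<close>)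
    also have "\<dots> = \<delta> * M" by (simp add: M_def algebra_simps)
    also have "\<dots> \<le> e / (M + 1) * M"
      using approx M by (intro mult_right_mono) (simp_all add: \<delta>_def)
    also have "\<dots> \<le> e" using e M by (simp add: field_simps)
    finally show ?thesis by simp
  qed
  then have "cmod (fourier_int S k x m - coeff k * (wshift a ^^ k) x m) \<le> 0"
    by (rule field_le_epsilon)
  then show ?thesis by simp
qed

lemma fcoeff_eq: "fcoeff a S k = coeff k"
  unfolding fcoeff_def
proof (rule the_equality)
  show "\<forall>x\<in>l2. fourier_int S k x = (\<lambda>m. coeff k * (wshift a ^^ k) x m)"
    using fourier_int_eq by blast
next
  fix c assume "\<forall>x\<in>l2. fourier_int S k x = (\<lambda>m. c * (wshift a ^^ k) x m)"
  then have "c * shift_weight a k 0 = coeff k * shift_weight a k 0"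
    using fourier_int_eq[OF l2_unitvec[of 0], of k k] l2_unitvec[of 0]
    by (fastforce simp: wshift_power_apply unitvec_def)
  then show "c = coeff k" using shift_weight_nonzero[of k 0] by simp
qed

section \<open>Convergence of the Fourier series\<close>

lemma coeff_diff_L2_le:
  "sqrt (\<Sum>k=1..n. (cmod ((if k \<in> {1..N} then c k else 0) - coeff k))\<^sup>2
      * (cmod (shift_weight a k 0))\<^sup>2)
    \<le> opnorm (\<lambda>x m. S x m - polyop a c N x m)"
proof -
  let ?Q = "\<lambda>x m. S x m - polyop a c N x m"
  have Qe0: "?Q (unitvec 0) \<in> l2" by (rule bounded_op_l2[OF bounded_op_S_minus_polyop l2_unitvec])
  have "(\<Sum>k=1..n. (cmod ((if k \<in> {1..N} then c k else 0) - coeff k))\<^sup>2 * (cmod (shift_weight a k 0))\<^sup>2)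
      = (\<Sum>k=1..n. (cmod (?Q (unitvec 0) k))\<^sup>2)"
    unfolding S_minus_polyop_unitvec_0 by (simp add: norm_mult power_mult_distrib norm_minus_commute)
  also have "\<dots> \<le> (l2norm (?Q (unitvec 0)))\<^sup>2"
    by (rule sum_sq_le_l2norm_sq[OF Qe0]) simp
  also have "\<dots> \<le> (opnorm ?Q)\<^sup>2"
    using l2norm_le_opnorm[OF bounded_op_S_minus_polyop l2_unitvec] l2norm_nonneg[OF Qe0]
    by (simp add: l2norm_unitvec power_mono)
  finally show ?thesis
    using opnorm_nonneg[OF bounded_op_S_minus_polyop] by (simp add: real_sqrt_le_iff real_le_lsqrt)
qed

lemma partial_sum_error_le:
  assumes "N \<le> n"
  shows "opnorm (\<lambda>x m. S x m - polyop a (fcoeff a S) n x m)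
    \<le> (1 + sqrt (\<Sum>j. (cmod (a j))\<^sup>2) / cmod (a 0)) * opnorm (\<lambda>x m. S x m - polyop a c N x m)"
proof -
  define K where "K = sqrt (\<Sum>j. (cmod (a j))\<^sup>2) / cmod (a 0)"
  define Q where "Q = (\<lambda>x m. S x m - polyop a c N x m)"
  define d where "d k = (if k \<in> {1..N} then c k else 0) - coeff k" for k
  have K: "0 \<le> K" unfolding K_def using suminf_nonneg[OF square_summable] by simp
  have Q: "bounded_op Q" unfolding Q_def by (rule bounded_op_S_minus_polyop)
  have split: "(\<lambda>m. S x m - polyop a (fcoeff a S) n x m) = (\<lambda>m. Q x m + 1 * polyop a d n x m)" for x
  proof
    fix m
    have "polyop a c N x m = (\<Sum>k=1..n. (if k \<in> {1..N} then c k else 0) * (wshift a ^^ k) x m)"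
      unfolding polyop_def using assms by (intro sum.mono_neutral_cong_left) auto
    then show "S x m - polyop a (fcoeff a S) n x m = Q x m + 1 * polyop a d n x m"
      unfolding Q_def polyop_def d_def fcoeff_eq by (simp add: sum_subtractf algebra_simps)
  qed
  have coeffs: "sqrt (\<Sum>k=1..n. (cmod (d k))\<^sup>2 * (cmod (shift_weight a k 0))\<^sup>2) \<le> opnorm Q"
    unfolding Q_def d_def by (rule coeff_diff_L2_le)
  have "l2norm (\<lambda>m. S x m - polyop a (fcoeff a S) n x m) \<le> ((1 + K) * opnorm Q) * l2norm x"
    if x: "x \<in> l2" for x
  proof -
    have "l2norm (\<lambda>m. S x m - polyop a (fcoeff a S) n x m) \<le> l2norm (Q x) + l2norm (polyop a d n x)"
      unfolding split
      using l2norm_add_scaled_le[OF bounded_op_l2[OF Q x] l2_polyop[OF nonzero decreasing square_summable x],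
          of 1 d n]
      by simp
    also have "\<dots> \<le> opnorm Q * l2norm x + K * opnorm Q * l2norm x"
    proof (rule add_mono)
      show "l2norm (Q x) \<le> opnorm Q * l2norm x" by (rule l2norm_le_opnorm[OF Q x])
      have "l2norm (polyop a d n x)
          \<le> K * sqrt (\<Sum>k=1..n. (cmod (d k))\<^sup>2 * (cmod (shift_weight a k 0))\<^sup>2) * l2norm x"
        unfolding K_def by (rule l2norm_polyop_le[OF nonzero decreasing square_summable x])
      also have "\<dots> \<le> K * opnorm Q * l2norm x"
        using coeffs K l2norm_nonneg[OF x] by (intro mult_right_mono mult_left_mono)
      finally show "l2norm (polyop a d n x) \<le> K * opnorm Q * l2norm x" .
    qed
    finally show ?thesis by (simp add: algebra_simps)
  qed
  then show ?thesis
    using opnorm_le[of "\<lambda>x m. S x m - polyop a (fcoeff a S) n x m" "(1 + K) * opnorm Q"]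
      K opnorm_nonneg[OF Q] by (simp add: Q_def K_def)
qed

lemma partial_sums_tendsto:
  "(\<lambda>n. opnorm (\<lambda>x m. S x m - polyop a (fcoeff a S) n x m)) \<longlonglongrightarrow> 0"
proof (rule LIMSEQ_I)
  fix e :: real assume e: "e > 0"
  define K where "K = sqrt (\<Sum>j. (cmod (a j))\<^sup>2) / cmod (a 0)"
  have K: "0 \<le> K" unfolding K_def using suminf_nonneg[OF square_summable] by simp
  obtain c N where approx: "opnorm (\<lambda>x m. S x m - polyop a c N x m) < e / (1 + K)"
    using polyop_approx[of "e / (1 + K)"] e K by auto
  have "norm (opnorm (\<lambda>x m. S x m - polyop a (fcoeff a S) n x m) - 0) < e" if "N \<le> n" for n
  proof -
    have "opnorm (\<lambda>x m. S x m - polyop a (fcoeff a S) n x m)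
        \<le> (1 + K) * opnorm (\<lambda>x m. S x m - polyop a c N x m)"
      using partial_sum_error_le[OF that] by (simp add: K_def)
    also have "\<dots> < e" using approx K by (simp add: field_simps)
    finally show ?thesis using opnorm_nonneg[OF bounded_op_S_minus_polyop] by simp
  qed
  then show "\<exists>n0. \<forall>n\<ge>n0. norm (opnorm (\<lambda>x m. S x m - polyop a (fcoeff a S) n x m) - 0) < e"
    by blast
qed

end

theorem mainTheorem9:
  fixes a :: "nat \<Rightarrow> complex"
    and S :: "(nat \<Rightarrow> complex) \<Rightarrow> (nat \<Rightarrow> complex)"
  assumes "\<forall>n. a n \<noteq> 0"
    and "\<forall>n. cmod (a (Suc n)) \<le> cmod (a n)"
    and "summable (\<lambda>n. (cmod (a n))\<^sup>2)"
    and "S \<in> alg_T a"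
  shows "(\<lambda>n. opnorm (\<lambda>x m. S x m - (\<Sum>k=1..n. fcoeff a S k * (wshift a ^^ k) x m)))
           \<longlonglongrightarrow> 0"
proof -
  interpret weighted_shift_algebra_element a S
    using assms by unfold_locales (auto intro: decseq_SucI)
  show ?thesis
    using partial_sums_tendsto unfolding polyop_def .
qed

end
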